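(* Let $A,B,C$ be agents and $\alpha,\beta,\gamma,\delta\ge0$, $\zeta\in(0,1]$. Use the following notation for interactive processes: $B_C^{\mathrm{dist}}$ is $B$ prompted to act as $C$ and then given the distinguisher prompt with respect to $C$; $C^{\mathrm{dist}}$ is $C$ given the distinguisher prompt; $A_{C}$ is $A$ given the actor prompt to imitate $C$; $B_C$ is $B$ given the actor prompt to imitate $C$; $A_{B,C}$ is $A$ given the actor prompt to imitate $B$ and then receiving (as its first incoming message) the actor prompt to imitate $C$. For a distinguisher process $\Pi$ and interlocutor $Y$ write $\Pr[\Pi\to b\mid Y]$ for the probability that $\Pi$, interacting with $Y$, finally outputs the bit $b$. Assume: (1) $A\geq_\alpha B$ and $B\geq_\beta C$ (GTT comparator). (2) ($\zeta$-Turing-recursivity of $B$ w.r.t. $C$.) In $\mathrm{GTT}(A,B)$ there is an event $R$, independent of the identity of the unknown agent, with $\Pr[R]\ge\zeta$, such that conditioned on $R$ the distinguisher $B$ sends the actor prompt for imitating $C$ and thereafter behaves exactly as $B_C^{\mathrm{dist}}$; thus conditioned on $R$, its output has the law of $B_C^{\mathrm{dist}}$ interacting with $A_{B,C}$ if the unknown agent is $A$, and with $B_C$ if the unknown agent is $B$. (3) (Better than random.) Conditioned on the complement of $R$, $B$ succeeds in $\mathrm{GTT}(A,B)$ with probability at least $1/2$. (4) ($B\geq^{\mathrm{dist,stat}}_\gamma C$, in interactive form.) For every interlocutor $Y$ and $b\in\{0,1\}$, $\bigl|\Pr[B_C^{\mathrm{dist}}\to b\mid Y]-\Pr[C^{\mathrm{dist}}\to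 b\mid Y]\bigr|\le\gamma$. (5) ($A$ is a reasonably intelligent imitator of $C$.) $\Pr[C^{\mathrm{dist}}\to 0\mid A_C]\le \Pr[C^{\mathrm{dist}}\to 0\mid A_{B,C}]+\delta$. Then $A\geq_\epsilon C$ with $\epsilon=\alpha/\zeta+\beta+\gamma+\delta$.
   Context: GTT $\mathrm{GTT}(X,Y)$: a fresh $Y$ is the distinguisher (given the distinguisher prompt asking whether its interlocutor is a $Y$) and interacts with an unknown agent which with probability $1/2$ is a fresh $Y$ and with probability $1/2$ is a fresh $X$ given the actor prompt to imitate $Y$; the distinguisher outputs $1$ ("same as me") or $0$ and succeeds if correct. $p(X,Y)=\Pr[Y\text{ succeeds}]$, and the comparator $X\ge_\epsilon Y$ means $p(X,Y)\le\frac12+\epsilon$. In particular $p(A,C)=\frac12\Pr[C^{\mathrm{dist}}\to0\mid A_C]+\frac12\Pr[C^{\mathrm{dist}}\to1\mid C]$, where $C$ as interlocutor means a fresh instance of $C$ (equivalently $C$ imitating itself), and $p(B,C)=\frac12\Pr[C^{\mathrm{dist}}\to0\mid B_C]+\frac12\Pr[C^{\mathrm{dist}}\to1\mid C]$. *)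

theory Defs
  imports "HOL-Probability.Probability"
begin

text \<open>Agents have type 'a, distinguisher processes type 'p, interlocutors type 'i.
  Pr P Y b = probability that distinguisher process P, interacting with interlocutor Y,
  finally outputs bit b (True = 1 = "same as me", False = 0).
  dprompt Y     : Y given the distinguisher prompt (Y^dprompt)
  act X Y    : X given the actor prompt to imitate Y (X_Y)
  fresh Y    : a fresh instance of Y as interlocutor\<close>

definition output_law :: "('p \<Rightarrow> 'i \<Rightarrow> bool \<Rightarrow> real) \<Rightarrow> bool" where
  "output_law Pr \<longleftrightarrow> (\<forall>P Y. (\<forall>b. 0 \<le> Pr P Y b) \<and> Pr P Y False + Pr P Y True = 1)"

text \<open>Success probability p(X,Y) of the distinguisher Y in GTT(X,Y).\<close>
definition gtt_p ::
  "('p \<Rightarrow> 'i \<Rightarrow> bool \<Rightarrow> real) \<Rightarrow> ('a \<Rightarrow> 'p) \<Rightarrow> ('a \<Rightarrow> 'a \<Rightarrow> 'i) \<Rightarrow> ('a \<Rightarrow> 'i)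
     \<Rightarrow> 'a \<Rightarrow> 'a \<Rightarrow> real" where
  "gtt_p Pr dprompt act fresh X Y =
     1/2 * Pr (dprompt Y) (act X Y) False + 1/2 * Pr (dprompt Y) (fresh Y) True"

definition gtt_geq ::
  "('p \<Rightarrow> 'i \<Rightarrow> bool \<Rightarrow> real) \<Rightarrow> ('a \<Rightarrow> 'p) \<Rightarrow> ('a \<Rightarrow> 'a \<Rightarrow> 'i) \<Rightarrow> ('a \<Rightarrow> 'i)
     \<Rightarrow> 'a \<Rightarrow> real \<Rightarrow> 'a \<Rightarrow> bool" where
  "gtt_geq Pr dprompt act fresh X eps Y \<longleftrightarrow> gtt_p Pr dprompt act fresh X Y \<le> 1/2 + eps"

end

theory Submission
  imports Defs
begin

text \<open>On the event R the run of GTT(A,B) is a run of B_C^dist telling A_{B,C} apart from B_C,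
  and off R the distinguisher B is no worse than a coin flip. Hence the advantage of B_C^dist
  in that experiment is at most the advantage \<alpha> of B in GTT(A,B), amplified by 1/\<zeta>.
  The experiment defining p(A,C) is reached from it by three replacements, each paid for by one
  hypothesis: the interlocutor A_{B,C} by A_C (\<delta>), the reference B_C by a fresh C (\<beta>, since
  C itself cannot tell them apart), and the distinguisher B_C^dist by C^dist (\<gamma>).\<close>

definition success_prob :: "('p \<Rightarrow> 'i \<Rightarrow> bool \<Rightarrow> real) \<Rightarrow> 'p \<Rightarrow> 'i \<Rightarrow> 'i \<Rightarrow> real" where
  "success_prob Pr D I0 I1 = 1/2 * Pr D I0 False + 1/2 * Pr D I1 True"

lemma gtt_p_eq_success_prob:
  "gtt_p Pr dprompt act fresh X Y = success_prob Pr (dprompt Y) (act X Y) (fresh Y)"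
  unfolding gtt_p_def success_prob_def ..

lemma success_prob_replace_reference:
  assumes "output_law Pr" and "success_prob Pr D J I \<le> 1/2 + \<beta>"
  shows "success_prob Pr D I0 I \<le> success_prob Pr D I0 J + \<beta>"
proof -
  have "Pr D J False + Pr D J True = 1"
    using assms(1) unfolding output_law_def by blast
  then show ?thesis
    using assms(2) unfolding success_prob_def by linarith
qed

lemma success_prob_close_distinguisher:
  assumes "\<And>Y b. \<bar>Pr D Y b - Pr D' Y b\<bar> \<le> \<gamma>"
  shows "success_prob Pr D' I0 I1 \<le> success_prob Pr D I0 I1 + \<gamma>"
  using assms[of I0 False] assms[of I1 True] unfolding success_prob_def by linarith

lemma le_divide_of_mult_le_lower_bound:
  fixes x r \<zeta> \<alpha> :: real
  assumes "0 < \<zeta>" "\<zeta> \<le> r" "0 \<le> \<alpha>" "r * x \<le> \<alpha>"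
  shows "x \<le> \<alpha> / \<zeta>"
proof (cases "x \<le> 0")
  case True
  then show ?thesis using assms(1,3) by (smt (verit) divide_nonneg_pos)
next
  case False
  then have "\<zeta> * x \<le> \<alpha>"
    using assms(2,4) by (smt (verit) mult_right_mono)
  then show ?thesis using assms(1) by (simp add: pos_le_divide_eq mult.commute)
qed

definition (in prob_space) correct_event :: "'a set \<Rightarrow> 'a set \<Rightarrow> 'a set" where
  "correct_event S Out = (S \<inter> Out) \<union> ((space M - S) \<inter> (space M - Out))"

lemma (in prob_space) correct_event_in_events:
  "S \<in> events \<Longrightarrow> Out \<in> events \<Longrightarrow> correct_event S Out \<in> events"
  unfolding correct_event_def by auto

lemma (in prob_space) prob_correct_event:
  assumes "S \<in> events" "Out \<in> events"
  shows "prob (correct_event S Out) = prob (S \<inter> Out) + prob ((space M - S) \<inter> (space M - Out))"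
  unfolding correct_event_def by (rule finite_measure_Union) (use assms in auto)

lemma (in prob_space) prob_Int_correct_event:
  assumes events: "S \<in> events" "Out \<in> events" "R \<in> events"
    and coin: "prob S = 1/2"
    and indep: "prob (R \<inter> S) = prob R * prob S"
    and cond0: "prob (R \<inter> (space M - S) \<inter> (space M - Out)) = prob (R \<inter> (space M - S)) * q0"
    and cond1: "prob (R \<inter> S \<inter> Out) = prob (R \<inter> S) * q1"
  shows "prob (R \<inter> correct_event S Out) = prob R * (1/2 * q0 + 1/2 * q1)"
proof -
  have "R \<inter> correct_event S Out = (R \<inter> (space M - S) \<inter> (space M - Out)) \<union> (R \<inter> S \<inter> Out)"
    unfolding correct_event_def by auto
  then have split: "prob (R \<inter> correct_event S Out)
      = prob (R \<inter> (space M - S) \<inter> (space M - Out)) + prob (R \<inter> S \<inter> Out)"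
    by (simp only:) (rule finite_measure_Union, use events in auto)
  have RS: "prob (R \<inter> S) = prob R / 2"
    using indep coin by simp
  have "R \<inter> (space M - S) = R - S"
    using sets.sets_into_space[OF events(3)] by auto
  then have "prob (R \<inter> (space M - S)) = prob R / 2"
    using events RS by (simp add: finite_measure_Diff')
  then show ?thesis
    using split cond0 cond1 RS by (simp add: algebra_simps)
qed

lemma (in prob_space) prob_ge_of_split:
  assumes "W \<in> events" "R \<in> events"
    and on_R: "prob (R \<inter> W) = prob R * q"
    and off_R: "prob ((space M - R) \<inter> W) \<ge> 1/2 * prob (space M - R)"
  shows "1/2 + prob R * (q - 1/2) \<le> prob W"
proof -
  have "(space M - R) \<inter> W = W - R"
    using sets.sets_into_space[OF assms(1)] by auto
  then have "prob W = prob (R \<inter> W) + prob ((space M - R) \<inter> W)"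
    using assms(1,2) by (simp add: finite_measure_Diff' Int_commute)
  then show ?thesis
    using on_R off_R prob_compl[OF assms(2)] by (simp add: algebra_simps)
qed

theorem mainTheorem4:
  fixes Pr :: "'p \<Rightarrow> 'i \<Rightarrow> bool \<Rightarrow> real"
    and dprompt :: "'a \<Rightarrow> 'p"
    and distAs :: "'a \<Rightarrow> 'a \<Rightarrow> 'p"
    and act :: "'a \<Rightarrow> 'a \<Rightarrow> 'i"
    and act2 :: "'a \<Rightarrow> 'a \<Rightarrow> 'a \<Rightarrow> 'i"
    and fresh :: "'a \<Rightarrow> 'i"
    and A B C :: 'a
    and \<alpha> \<beta> \<gamma> \<delta> \<zeta> :: real
    and M :: "'w measure"
    and S Out1 R :: "'w set"
  assumes law: "output_law Pr"
    and nonneg: "\<alpha> \<ge> 0" "\<beta> \<ge> 0" "\<gamma> \<ge> 0" "\<delta> \<ge> 0"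
    and zeta: "0 < \<zeta>" "\<zeta> \<le> 1"
    \<comment> \<open>(1) comparator hypotheses\<close>
    and h1: "gtt_geq Pr dprompt act fresh A \<alpha> B" "gtt_geq Pr dprompt act fresh B \<beta> C"
    \<comment> \<open>the run of GTT(A,B) as a probability space: S = unknown agent is B,
        Out1 = distinguisher B outputs 1; its marginals are those defining p(A,B)\<close>
    and M: "prob_space M" "S \<in> sets M" "Out1 \<in> sets M" "R \<in> sets M"
    and coin: "measure M S = 1/2"
    and gttAB: "measure M ((space M - S) \<inter> (space M - Out1)) = 1/2 * Pr (dprompt B) (act A B) False"
               "measure M (S \<inter> Out1) = 1/2 * Pr (dprompt B) (fresh B) True"
    \<comment> \<open>(2) zeta-Turing-recursivity of B w.r.t. C\<close>
    and indep: "measure M (R \<inter> S) = measure M R * measure M S"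
    and probR: "measure M R \<ge> \<zeta>"
    and condA: "\<And>b. measure M (R \<inter> (space M - S) \<inter> {w \<in> space M. (w \<in> Out1) = b})
                     = measure M (R \<inter> (space M - S)) * Pr (distAs B C) (act2 A B C) b"
    and condB: "\<And>b. measure M (R \<inter> S \<inter> {w \<in> space M. (w \<in> Out1) = b})
                     = measure M (R \<inter> S) * Pr (distAs B C) (act B C) b"
    \<comment> \<open>(3) better than random on the complement of R\<close>
    and notR: "measure M ((space M - R) \<inter> ((S \<inter> Out1) \<union> ((space M - S) \<inter> (space M - Out1))))
                 \<ge> 1/2 * measure M (space M - R)"
    \<comment> \<open>(4) distinguisher statistical closeness\<close>
    and h4: "\<And>Y b. \<bar>Pr (distAs B C) Y b - Pr (dprompt C) Y b\<bar> \<le> \<gamma>"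
    \<comment> \<open>(5) A is a reasonably intelligent imitator of C\<close>
    and h5: "Pr (dprompt C) (act A C) False \<le> Pr (dprompt C) (act2 A B C) False + \<delta>"
  shows "gtt_geq Pr dprompt act fresh A (\<alpha> / \<zeta> + \<beta> + \<gamma> + \<delta>) C"
proof -
  interpret prob_space M by (rule M(1))
  define s where "s = success_prob Pr (distAs B C) (act2 A B C) (act B C)"
  have "{w \<in> space M. (w \<in> Out1) = False} = space M - Out1"
       "{w \<in> space M. (w \<in> Out1) = True} = Out1"
    using sets.sets_into_space[OF M(3)] by auto
  then have "prob (R \<inter> correct_event S Out1) = prob R * s"
    using prob_Int_correct_event[OF M(2-4) coin indep] condA[of False] condB[of True]
    unfolding s_def success_prob_def by simp
  then have "1/2 + prob R * (s - 1/2) \<le> prob (correct_event S Out1)"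
    using prob_ge_of_split correct_event_in_events M(2-4) notR unfolding correct_event_def by blast
  also have "\<dots> = gtt_p Pr dprompt act fresh A B"
    using prob_correct_event[OF M(2,3)] gttAB unfolding gtt_p_def by simp
  also have "\<dots> \<le> 1/2 + \<alpha>"
    using h1(1) unfolding gtt_geq_def .
  finally have s: "s - 1/2 \<le> \<alpha> / \<zeta>"
    using le_divide_of_mult_le_lower_bound zeta(1) probR nonneg(1) by simp
  have "gtt_p Pr dprompt act fresh A C \<le> success_prob Pr (dprompt C) (act2 A B C) (fresh C) + \<delta>/2"
    using h5 unfolding gtt_p_eq_success_prob success_prob_def by simp
  also have "\<dots> \<le> success_prob Pr (dprompt C) (act2 A B C) (act B C) + \<beta> + \<delta>/2"
    using success_prob_replace_reference[OF law] h1(2)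
    unfolding gtt_geq_def gtt_p_eq_success_prob by fastforce
  also have "\<dots> \<le> s + \<gamma> + \<beta> + \<delta>/2"
    using success_prob_close_distinguisher[where Pr = Pr and D = "distAs B C", OF h4]
    unfolding s_def by fastforce
  finally show ?thesis
    using s nonneg(4) unfolding gtt_geq_def by linarith
qed

end
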